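(* Let $\mathcal{X}$ be a finite set with $|\mathcal{X}|=n$, $\pi$ a probability mass function on $\mathcal{X}$ with full support, and $P$ a $\pi$-reversible transition matrix. Let a group $\mathcal{G}$ act on $\mathcal{X}$ with $k<n$ orbits $(\mathcal{O}_i)_{i=1}^k$, and let $G$ be the Gibbs orbit kernel. Then $\mathrm{spec}(GPG)=\mathrm{spec}(\overline{P})\cup\{0\}$.
   Context: $G(x,y)=\pi(y)/\pi(\mathcal{O}(x))$ for $y$ in the orbit $\mathcal{O}(x)$ of $x$, else $0$, with $\pi(A)=\sum_{z\in A}\pi(z)$. The projection chain is $\overline{P}(i,j)=\frac{1}{\pi(\mathcal{O}_i)}\sum_{x\in\mathcal{O}_i,y\in\mathcal{O}_j}\pi(x)P(x,y)$ on $\{1,\dots,k\}$. $\mathrm{spec}(K)$ denotes the set of distinct eigenvalues of $K$. *)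

theory Defs
  imports "HOL-Analysis.Analysis" "HOL-Algebra.Group_Action"
begin

text \<open>Matrices on a finite carrier S are functions of two arguments; only entries
  indexed by S matter.  Spectrum = set of distinct (complex) eigenvalues.\<close>

definition spec_on :: "'a set \<Rightarrow> ('a \<Rightarrow> 'a \<Rightarrow> real) \<Rightarrow> complex set" where
  "spec_on S K = {c. \<exists>v :: 'a \<Rightarrow> complex. (\<exists>x\<in>S. v x \<noteq> 0) \<and>
       (\<forall>x\<in>S. (\<Sum>y\<in>S. complex_of_real (K x y) * v y) = c * v x)}"

definition mat_mult :: "('a::finite \<Rightarrow> 'a \<Rightarrow> real) \<Rightarrow> ('a \<Rightarrow> 'a \<Rightarrow> real) \<Rightarrow> ('a \<Rightarrow> 'a \<Rightarrow> real)" where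
  "mat_mult A B = (\<lambda>x z. \<Sum>y\<in>UNIV. A x y * B y z)"

definition pmass :: "('a \<Rightarrow> real) \<Rightarrow> 'a set \<Rightarrow> real" where
  "pmass \<pi> A = (\<Sum>z\<in>A. \<pi> z)"

definition gibbs_orbit_kernel ::
  "('g, 'm) monoid_scheme \<Rightarrow> ('g \<Rightarrow> 'a \<Rightarrow> 'a) \<Rightarrow> ('a \<Rightarrow> real) \<Rightarrow> 'a \<Rightarrow> 'a \<Rightarrow> real" where
  "gibbs_orbit_kernel G \<phi> \<pi> x y =
     (if y \<in> orbit G \<phi> x then \<pi> y / pmass \<pi> (orbit G \<phi> x) else 0)"

definition projection_chain ::
  "('a \<Rightarrow> real) \<Rightarrow> ('a \<Rightarrow> 'a \<Rightarrow> real) \<Rightarrow> 'a set \<Rightarrow> 'a set \<Rightarrow> real" where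
  "projection_chain \<pi> P Oi Oj = (\<Sum>x\<in>Oi. \<Sum>y\<in>Oj. \<pi> x * P x y) / pmass \<pi> Oi"

end

theory Submission
  imports Defs
begin

text \<open>The Gibbs orbit kernel G replaces a vector by its \<pi>-weighted average over each orbit, so it
  is a projection onto the orbit-constant vectors, and on such vectors GP acts exactly as the
  projection chain. An eigenvector of GPG for an eigenvalue c \<noteq> 0 lies in the range of G, hence
  is orbit-constant and descends to an eigenvector of the projection chain; conversely
  eigenvectors of the projection chain lift to orbit-constant eigenvectors of GPG. Finally, some
  orbit contains two points a \<noteq> b because there are fewer orbits than points, and the vector
  with entry \<pi>(b) at a, -\<pi>(a) at b and 0 elsewhere has zero average on every orbit, so 0 is an
  eigenvalue of GPG.\<close>

definition mat_vec :: "('a::finite \<Rightarrow> 'a \<Rightarrow> real) \<Rightarrow> ('a \<Rightarrow> complex) \<Rightarrow> 'a \<Rightarrow> complex" where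
  "mat_vec K v x = (\<Sum>y\<in>UNIV. complex_of_real (K x y) * v y)"

lemma mat_vec_mat_mult: "mat_vec (mat_mult A B) v = mat_vec A (mat_vec B v)"
  unfolding mat_vec_def mat_mult_def of_real_sum sum_distrib_left sum_distrib_right
  by (subst sum.swap) (simp add: mult.assoc)

lemma mat_vec_zero [simp]: "mat_vec K (\<lambda>_. 0) = (\<lambda>_. 0)"
  by (simp add: mat_vec_def fun_eq_iff)

lemma spec_on_UNIV_iff:
  "c \<in> spec_on UNIV K \<longleftrightarrow> (\<exists>v. (\<exists>x. v x \<noteq> 0) \<and> mat_vec K v = (\<lambda>x. c * v x))"
  by (auto simp: spec_on_def mat_vec_def fun_eq_iff)

lemma (in group_action) orbit_eq_of_mem:
  assumes "x \<in> E" and "y \<in> orbit G \<phi> x"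
  shows "orbit G \<phi> y = orbit G \<phi> x"
proof -
  have "y \<in> E"
    using assms by (auto simp: orbit_def element_image)
  have "orbit G \<phi> y \<subseteq> E" "orbit G \<phi> x \<subseteq> E"
    using \<open>x \<in> E\<close> \<open>y \<in> E\<close> by (auto simp: orbit_def element_image)
  then show ?thesis
    using assms \<open>y \<in> E\<close> orbit_sym orbit_trans by blast
qed

locale gibbs_orbit_kernel_setting = group_action G "UNIV :: 'x set" \<phi>
  for G :: "('g, 'm) monoid_scheme" and \<phi> :: "'g \<Rightarrow> 'x::finite \<Rightarrow> 'x" +
  fixes \<pi> :: "'x \<Rightarrow> real"
  assumes pi_pos: "\<And>x. \<pi> x > 0"
begin

abbreviation gibbs :: "'x \<Rightarrow> 'x \<Rightarrow> real" where
  "gibbs \<equiv> gibbs_orbit_kernel G \<phi> \<pi>"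

lemma orbit_mem_orbits: "orbit G \<phi> x \<in> orbits G UNIV \<phi>"
  by (auto simp: orbits_def)

lemma pmass_orbit_pos: "pmass \<pi> (orbit G \<phi> x) > 0"
  unfolding pmass_def using orbit_refl[of x] pi_pos by (intro sum_pos) auto

lemma mat_vec_gibbs:
  "mat_vec gibbs v x = (\<Sum>y\<in>orbit G \<phi> x. complex_of_real (\<pi> y / pmass \<pi> (orbit G \<phi> x)) * v y)"
  unfolding mat_vec_def
  by (rule sum.mono_neutral_cong_right) (auto simp: gibbs_orbit_kernel_def)

lemma mat_vec_gibbs_factors_through_orbit:
  obtains u where "mat_vec gibbs v = (\<lambda>x. u (orbit G \<phi> x))"
  using mat_vec_gibbs[of v] by (intro that[of "\<lambda>Q. \<Sum>y\<in>Q. complex_of_real (\<pi> y / pmass \<pi> Q) * v y"]) auto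

lemma mat_vec_gibbs_orbit_function:
  "mat_vec gibbs (\<lambda>x. u (orbit G \<phi> x)) = (\<lambda>x. u (orbit G \<phi> x))"
proof
  fix x
  let ?Q = "orbit G \<phi> x"
  have "mat_vec gibbs (\<lambda>x. u (orbit G \<phi> x)) x
      = (\<Sum>y\<in>?Q. complex_of_real (\<pi> y / pmass \<pi> ?Q)) * u ?Q"
    unfolding mat_vec_gibbs sum_distrib_right by (intro sum.cong) (auto simp: orbit_eq_of_mem)
  also have "(\<Sum>y\<in>?Q. complex_of_real (\<pi> y / pmass \<pi> ?Q)) = 1"
    using pmass_orbit_pos[of x]
    unfolding of_real_sum[symmetric] sum_divide_distrib[symmetric] by (simp add: pmass_def)
  finally show "mat_vec gibbs (\<lambda>x. u (orbit G \<phi> x)) x = u ?Q"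
    by simp
qed

lemma mat_vec_gibbs_mat_vec_orbit_function:
  "mat_vec gibbs (mat_vec P (\<lambda>y. u (orbit G \<phi> y))) x
     = (\<Sum>Q\<in>orbits G UNIV \<phi>. complex_of_real (projection_chain \<pi> P (orbit G \<phi> x) Q) * u Q)"
proof -
  let ?O = "orbit G \<phi> x"
  let ?c = "\<lambda>a. complex_of_real (\<pi> a / pmass \<pi> ?O)"
  have "mat_vec gibbs (mat_vec P (\<lambda>y. u (orbit G \<phi> y))) x
      = (\<Sum>a\<in>?O. ?c a * (\<Sum>Q\<in>orbits G UNIV \<phi>. \<Sum>b\<in>Q. complex_of_real (P a b) * u (orbit G \<phi> b)))"
    unfolding mat_vec_gibbs by (simp add: mat_vec_def disjoint_sum)
  also have "\<dots> = (\<Sum>Q\<in>orbits G UNIV \<phi>. \<Sum>a\<in>?O. \<Sum>b\<in>Q. ?c a * complex_of_real (P a b) * u Q)"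
    unfolding sum_distrib_left
    by (subst sum.swap) (auto intro!: sum.cong simp: orbits_def orbit_eq_of_mem mult.assoc)
  also have "\<dots> = (\<Sum>Q\<in>orbits G UNIV \<phi>. complex_of_real (projection_chain \<pi> P ?O Q) * u Q)"
    unfolding projection_chain_def of_real_divide of_real_sum sum_divide_distrib sum_distrib_right
    by (intro sum.cong refl) (simp add: field_simps)
  finally show ?thesis .
qed

lemma mat_vec_gibbs_balanced_pair:
  assumes "a \<noteq> b" and "b \<in> orbit G \<phi> a"
  shows "mat_vec gibbs (\<lambda>y. (if y = a then complex_of_real (\<pi> b) else 0)
                           - (if y = b then complex_of_real (\<pi> a) else 0)) = (\<lambda>_. 0)"
    (is "mat_vec gibbs ?v = _")
proof
  fix x
  let ?Q = "orbit G \<phi> x"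
  have ab_iff: "a \<in> ?Q \<longleftrightarrow> b \<in> ?Q"
    using assms(2) orbit_eq_of_mem orbit_refl by (metis UNIV_I)
  show "mat_vec gibbs ?v x = 0"
  proof (cases "a \<in> ?Q")
    case True
    have "mat_vec gibbs ?v x = (\<Sum>y\<in>{a, b}. complex_of_real (\<pi> y / pmass \<pi> ?Q) * ?v y)"
      unfolding mat_vec_gibbs by (rule sum.mono_neutral_right) (use True ab_iff in auto)
    then show ?thesis
      using assms(1) by (simp add: field_simps)
  next
    case False
    then show ?thesis
      unfolding mat_vec_gibbs using ab_iff by (intro sum.neutral) auto
  qed
qed

lemma spec_projection_chain_subset:
  "spec_on (orbits G UNIV \<phi>) (projection_chain \<pi> P) \<subseteq> spec_on UNIV (mat_mult (mat_mult gibbs P) gibbs)"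
proof
  fix c assume "c \<in> spec_on (orbits G UNIV \<phi>) (projection_chain \<pi> P)"
  then obtain u Q0 where "Q0 \<in> orbits G UNIV \<phi>" "u Q0 \<noteq> 0"
    and eig: "\<And>Q. Q \<in> orbits G UNIV \<phi> \<Longrightarrow>
       (\<Sum>Q'\<in>orbits G UNIV \<phi>. complex_of_real (projection_chain \<pi> P Q Q') * u Q') = c * u Q"
    unfolding spec_on_def by blast
  define v where "v = (\<lambda>x. u (orbit G \<phi> x))"
  have "\<exists>x. v x \<noteq> 0"
    using \<open>Q0 \<in> _\<close> \<open>u Q0 \<noteq> 0\<close> by (auto simp: v_def orbits_def)
  moreover have "mat_vec (mat_mult (mat_mult gibbs P) gibbs) v = (\<lambda>x. c * v x)"
    unfolding mat_vec_mat_mult v_def mat_vec_gibbs_orbit_function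
    by (simp add: fun_eq_iff mat_vec_gibbs_mat_vec_orbit_function eig[OF orbit_mem_orbits])
  ultimately show "c \<in> spec_on UNIV (mat_mult (mat_mult gibbs P) gibbs)"
    unfolding spec_on_UNIV_iff by blast
qed

lemma nonzero_spec_subset_spec_projection_chain:
  assumes "c \<in> spec_on UNIV (mat_mult (mat_mult gibbs P) gibbs)" and "c \<noteq> 0"
  shows "c \<in> spec_on (orbits G UNIV \<phi>) (projection_chain \<pi> P)"
proof -
  obtain v where v_nonzero: "\<exists>x. v x \<noteq> 0" and eig: "mat_vec gibbs (mat_vec P (mat_vec gibbs v)) = (\<lambda>x. c * v x)"
    using assms(1) unfolding spec_on_UNIV_iff mat_vec_mat_mult by blast
  obtain w where w: "mat_vec gibbs (mat_vec P (mat_vec gibbs v)) = (\<lambda>x. w (orbit G \<phi> x))"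
    by (rule mat_vec_gibbs_factors_through_orbit)
  define u where "u = (\<lambda>Q. w Q / c)"
  have v_eq: "v = (\<lambda>x. u (orbit G \<phi> x))"
    using eig w \<open>c \<noteq> 0\<close> by (auto simp: u_def fun_eq_iff field_simps)
  have "\<exists>Q\<in>orbits G UNIV \<phi>. u Q \<noteq> 0"
    using v_nonzero by (auto simp: v_eq orbits_def)
  moreover have "(\<Sum>Q'\<in>orbits G UNIV \<phi>. complex_of_real (projection_chain \<pi> P Q Q') * u Q') = c * u Q"
    if Q: "Q \<in> orbits G UNIV \<phi>" for Q
  proof -
    obtain x where x: "Q = orbit G \<phi> x"
      using Q by (auto simp: orbits_def)
    show ?thesis
      using fun_cong[OF eig, of x]
      unfolding x v_eq mat_vec_gibbs_orbit_function mat_vec_gibbs_mat_vec_orbit_function .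
  qed
  ultimately show ?thesis
    unfolding spec_on_def by blast
qed

lemma zero_mem_spec_of_card_orbits_less:
  assumes "card (orbits G UNIV \<phi>) < CARD('x)"
  shows "0 \<in> spec_on UNIV (mat_mult (mat_mult gibbs P) gibbs)"
proof -
  have "\<not> inj (orbit G \<phi>)"
  proof
    assume "inj (orbit G \<phi>)"
    then have "card (orbits G UNIV \<phi>) = CARD('x)"
      by (simp add: orbits_def full_SetCompr_eq card_image)
    with assms show False by simp
  qed
  then obtain a b where "a \<noteq> b" "orbit G \<phi> a = orbit G \<phi> b"
    unfolding inj_def by blast
  then have "b \<in> orbit G \<phi> a"
    using orbit_refl by simp
  define v :: "'x \<Rightarrow> complex" where
    "v = (\<lambda>y. (if y = a then complex_of_real (\<pi> b) else 0) - (if y = b then complex_of_real (\<pi> a) else 0))"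
  have "\<exists>x. v x \<noteq> 0"
    using \<open>a \<noteq> b\<close> pi_pos[of b] by (auto simp: v_def)
  moreover have "mat_vec (mat_mult (mat_mult gibbs P) gibbs) v = (\<lambda>x. 0 * v x)"
    unfolding mat_vec_mat_mult v_def mat_vec_gibbs_balanced_pair[OF \<open>a \<noteq> b\<close> \<open>b \<in> _\<close>] by simp
  ultimately show ?thesis
    unfolding spec_on_UNIV_iff by blast
qed

end

theorem proposition6p2:
  fixes \<pi> :: "'x::finite \<Rightarrow> real"
    and P :: "'x \<Rightarrow> 'x \<Rightarrow> real"
    and G :: "('g, 'm) monoid_scheme"
    and \<phi> :: "'g \<Rightarrow> 'x \<Rightarrow> 'x"
  assumes pi_pos: "\<And>x. \<pi> x > 0"
    and pi_sum: "(\<Sum>x\<in>UNIV. \<pi> x) = 1"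
    and P_nonneg: "\<And>x y. P x y \<ge> 0"
    and P_stoch: "\<And>x. (\<Sum>y\<in>UNIV. P x y) = 1"
    and P_rev: "\<And>x y. \<pi> x * P x y = \<pi> y * P y x"
    and act: "group_action G (UNIV :: 'x set) \<phi>"
    and k_lt_n: "card (orbits G (UNIV :: 'x set) \<phi>) < CARD('x)"
  shows "spec_on UNIV (mat_mult (mat_mult (gibbs_orbit_kernel G \<phi> \<pi>) P) (gibbs_orbit_kernel G \<phi> \<pi>))
         = spec_on (orbits G UNIV \<phi>) (projection_chain \<pi> P) \<union> {0}"
proof -
  interpret gibbs_orbit_kernel_setting G \<phi> \<pi>
    using act pi_pos by (intro gibbs_orbit_kernel_setting.intro gibbs_orbit_kernel_setting_axioms.intro)
  show ?thesis
    using spec_projection_chain_subset nonzero_spec_subset_spec_projection_chain zero_mem_spec_of_card_orbits_less[OF k_lt_n]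
    by blast
qed

end
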